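(* Let $\alpha\ge1$ and consider the WBDF3 coefficients $(a_0,a_1,a_2)=(\tfrac32\alpha+\tfrac13,\ \tfrac56-2\alpha,\ \tfrac12\alpha-\tfrac16)$, $(b_0,\dots,b_3)=(\alpha,1-\alpha,0,0)$, $(c_0,c_1,c_2)=(2\alpha+1,-3\alpha,\alpha)$. Then $$\sigma_{\mathrm{F}}=1,\quad\sigma_{\mathrm{E}}=\frac{3(6\alpha+1)}{2(6\alpha-1)},\quad\lambda_{\mathrm{I}}=\frac{3(2\alpha-1)}{2(6\alpha-1)},\quad\text{so that}\quad\mathfrak{I}_{\mathrm{IE}}=\frac{2\alpha-1}{6\alpha+1}.$$
   Context: For coefficient vectors $(a_j)_{j=0}^{\mathrm{k}-1}$, $(b_j)_{j=0}^{\mathrm{k}}$, $(c_j)_{j=0}^{\mathrm{k}-1}$ define $a(\theta)=\sum_j a_je^{\imath j\theta}$, $b(\theta)=\sum_j b_je^{\imath j\theta}$, $c(\theta)=\sum_jc_je^{\imath j\theta}$ and $\sigma_{\mathrm{F}}=\max_{\theta\in[0,2\pi)}|1/a(\theta)|$, $\sigma_{\mathrm{E}}=\max_{\theta\in[0,2\pi)}|c(\theta)/a(\theta)|$, $\lambda_{\mathrm{I}}=\min_{\theta\in[0,2\pi)}\Re[b(\theta)/a(\theta)]$, $\mathfrak{I}_{\mathrm{IE}}=\lambda_{\mathrm{I}}/\sigma_{\mathrm{E}}$. Here $\mathrm{k}=3$. *)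

theory Defs
  imports "HOL-Analysis.Analysis"
begin

definition trigpoly :: "real list \<Rightarrow> real \<Rightarrow> complex" where
  "trigpoly cs \<theta> = (\<Sum>j<length cs. complex_of_real (cs ! j) * exp (\<i> * of_nat j * complex_of_real \<theta>))"

text \<open>The max over [0, 2 pi) is rendered as the supremum (resp. infimum) over that set.\<close>
definition sigmaF :: "real list \<Rightarrow> real" where
  "sigmaF a = (SUP \<theta>\<in>{0..<2*pi}. cmod (1 / trigpoly a \<theta>))"

definition sigmaE :: "real list \<Rightarrow> real list \<Rightarrow> real" where
  "sigmaE a c = (SUP \<theta>\<in>{0..<2*pi}. cmod (trigpoly c \<theta> / trigpoly a \<theta>))"

definition lambdaI :: "real list \<Rightarrow> real list \<Rightarrow> real" where
  "lambdaI a b = (INF \<theta>\<in>{0..<2*pi}. Re (trigpoly b \<theta> / trigpoly a \<theta>))"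

definition IIE :: "real list \<Rightarrow> real list \<Rightarrow> real list \<Rightarrow> real" where
  "IIE a b c = lambdaI a b / sigmaE a c"

end

theory Submission
  imports Defs
begin

text \<open>Put \<open>x = cos \<theta>\<close>. The coefficients are real and, apart from the trailing zeros of \<open>b\<close>,
  there are at most three of them, so \<open>|a|\<^sup>2\<close>, \<open>|c|\<^sup>2\<close> and \<open>Re (b \<cdot> cnj a)\<close> are quadratic
  polynomials in \<open>x\<close>. Each claimed bound, with the positive denominators cleared, is a quadratic
  inequality in \<open>x\<close> that is an equality at an endpoint \<open>x = \<plusminus>1\<close> (\<open>\<theta> = 0\<close> for \<open>\<sigma>\<^sub>F\<close>,
  \<open>\<theta> = \<pi>\<close> for the other two). The difference therefore factors as \<open>(1 \<mp> x) (u + v x)\<close>,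
  and for \<open>\<alpha> \<ge> 1\<close> the linear factor is nonnegative at both endpoints, hence on \<open>[-1, 1]\<close>.\<close>

lemma trigpoly_eq_Complex:
  fixes \<theta> :: real
  shows "trigpoly cs \<theta> = Complex (\<Sum>j<length cs. cs ! j * cos (j * \<theta>)) (\<Sum>j<length cs. cs ! j * sin (j * \<theta>))"
  by (simp add: trigpoly_def complex_eq_iff Re_sum Im_sum Re_exp Im_exp mult.commute)

lemma trigpoly_append_zeros: "trigpoly (cs @ replicate n 0) \<theta> = trigpoly cs \<theta>"
  unfolding trigpoly_def lessThan_atLeast0
  by (simp add: sum.atLeastLessThan_concat[of 0 "length cs" "length cs + n", symmetric] nth_append)
     (auto intro!: sum.neutral)

lemma norm_trigpoly_three_sq:
  "(cmod (trigpoly [p, q, r] \<theta>))\<^sup>2 = (p - r)\<^sup>2 + q\<^sup>2 + 2 * q * (p + r) * cos \<theta> + 4 * p * r * (cos \<theta>)\<^sup>2"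
proof -
  have "(cmod (trigpoly [p, q, r] \<theta>))\<^sup>2 = (p + q * cos \<theta> + r * cos (2 * \<theta>))\<^sup>2 + (q * sin \<theta> + r * sin (2 * \<theta>))\<^sup>2"
    unfolding cmod_power2 by (simp add: trigpoly_eq_Complex eval_nat_numeral lessThan_Suc algebra_simps)
  also have "\<dots> = (p - r)\<^sup>2 + q\<^sup>2 + 2 * q * (p + r) * cos \<theta> + 4 * p * r * (cos \<theta>)\<^sup>2"
    unfolding cos_double_cos sin_double using sin_squared_eq[of \<theta>] by algebra
  finally show ?thesis .
qed

lemma Re_trigpoly_two_mult_cnj_three:
  "Re (trigpoly [s, t] \<theta> * cnj (trigpoly [p, q, r] \<theta>))
     = s * p + t * q - s * r + (s * q + t * p + t * r) * cos \<theta> + 2 * s * r * (cos \<theta>)\<^sup>2"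
proof -
  have "Re (trigpoly [s, t] \<theta> * cnj (trigpoly [p, q, r] \<theta>))
      = (s + t * cos \<theta>) * (p + q * cos \<theta> + r * cos (2 * \<theta>)) + t * sin \<theta> * (q * sin \<theta> + r * sin (2 * \<theta>))"
    by (simp add: trigpoly_eq_Complex eval_nat_numeral lessThan_Suc algebra_simps)
  also have "\<dots> = s * p + t * q - s * r + (s * q + t * p + t * r) * cos \<theta> + 2 * s * r * (cos \<theta>)\<^sup>2"
    unfolding cos_double_cos sin_double using sin_squared_eq[of \<theta>] by algebra
  finally show ?thesis .
qed

lemma unit_interval_factor_nonneg:
  fixes x u v :: real
  assumes "\<bar>x\<bar> \<le> 1" and "0 \<le> u - v" and "0 \<le> u + v"
  shows "0 \<le> (1 + x) * (u + v * x)" and "0 \<le> (1 - x) * (u + v * x)"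
proof -
  have "u + v * x = ((1 + x) * (u + v) + (1 - x) * (u - v)) / 2"
    by (simp add: algebra_simps)
  moreover have "0 \<le> (1 + x) * (u + v)" "0 \<le> (1 - x) * (u - v)"
    using assms by simp_all
  ultimately have "0 \<le> u + v * x" by simp
  moreover have "0 \<le> 1 + x" "0 \<le> 1 - x"
    using assms(1) by simp_all
  ultimately show "0 \<le> (1 + x) * (u + v * x)" and "0 \<le> (1 - x) * (u + v * x)"
    by simp_all
qed

lemma cSUP_eq_attained:
  fixes f :: "'a \<Rightarrow> 'b::conditionally_complete_linorder"
  shows "z \<in> S \<Longrightarrow> f z = M \<Longrightarrow> (\<And>x. x \<in> S \<Longrightarrow> f x \<le> M) \<Longrightarrow> (SUP x\<in>S. f x) = M"
  by (rule cSup_eq_maximum) auto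

lemma cINF_eq_attained:
  fixes f :: "'a \<Rightarrow> 'b::conditionally_complete_linorder"
  shows "z \<in> S \<Longrightarrow> f z = M \<Longrightarrow> (\<And>x. x \<in> S \<Longrightarrow> M \<le> f x) \<Longrightarrow> (INF x\<in>S. f x) = M"
  by (rule cInf_eq_minimum) auto

definition wbdf3_a :: "real \<Rightarrow> real list" where
  "wbdf3_a \<alpha> = [3/2*\<alpha> + 1/3, 5/6 - 2*\<alpha>, 1/2*\<alpha> - 1/6]"

definition wbdf3_b :: "real \<Rightarrow> real list" where
  "wbdf3_b \<alpha> = [\<alpha>, 1 - \<alpha>, 0, 0]"

definition wbdf3_c :: "real \<Rightarrow> real list" where
  "wbdf3_c \<alpha> = [2*\<alpha> + 1, -3*\<alpha>, \<alpha>]"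

lemma norm_trigpoly_wbdf3_a_ge_one:
  assumes "1 \<le> \<alpha>"
  shows "1 \<le> cmod (trigpoly (wbdf3_a \<alpha>) \<theta>)"
proof -
  define u where "u = 5 * \<alpha>\<^sup>2 - 7/3 * \<alpha> - 1/18"
  define v where "v = 2/9 + 1/3 * \<alpha> - 3 * \<alpha>\<^sup>2"
  have diff: "(cmod (trigpoly (wbdf3_a \<alpha>) \<theta>))\<^sup>2 = 1 + (1 - cos \<theta>) * (u + v * cos \<theta>)"
    unfolding wbdf3_a_def norm_trigpoly_three_sq u_def v_def
    by (simp add: power2_eq_square field_simps)
  have "0 \<le> (1 - cos \<theta>) * (u + v * cos \<theta>)"
  proof (rule unit_interval_factor_nonneg(2))
    have "\<alpha> \<le> \<alpha>\<^sup>2" using assms by (simp add: power2_eq_square)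
    then show "0 \<le> u - v" "0 \<le> u + v"
      using assms by (simp_all add: u_def v_def)
  qed simp
  with diff have "1\<^sup>2 \<le> (cmod (trigpoly (wbdf3_a \<alpha>) \<theta>))\<^sup>2"
    by simp
  then show ?thesis by (rule power2_le_imp_le) simp
qed

lemma norm_trigpoly_wbdf3_c_div_a_le:
  assumes "1 \<le> \<alpha>"
  shows "cmod (trigpoly (wbdf3_c \<alpha>) \<theta> / trigpoly (wbdf3_a \<alpha>) \<theta>) \<le> 3*(6*\<alpha> + 1) / (2*(6*\<alpha> - 1))"
proof -
  let ?A = "cmod (trigpoly (wbdf3_a \<alpha>) \<theta>)" and ?C = "cmod (trigpoly (wbdf3_c \<alpha>) \<theta>)"
  define u where "u = 9/2 + 121 * \<alpha> + 11 * \<alpha>\<^sup>2 - 24 * \<alpha>^3 + 180 * \<alpha>^4"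
  define v where "v = -2 - 43 * \<alpha> + 79 * \<alpha>\<^sup>2 + 24 * \<alpha>^3 - 180 * \<alpha>^4"
  have diff: "(3*(6*\<alpha> + 1) * ?A)\<^sup>2 - (2*(6*\<alpha> - 1) * ?C)\<^sup>2 = (1 + cos \<theta>) * (u + v * cos \<theta>)"
    unfolding power_mult_distrib wbdf3_a_def wbdf3_c_def norm_trigpoly_three_sq u_def v_def
    by (simp add: power2_eq_square power3_eq_cube power4_eq_xxxx field_simps)
  have "0 \<le> (1 + cos \<theta>) * (u + v * cos \<theta>)"
  proof (rule unit_interval_factor_nonneg(1))
    have "\<alpha> \<le> \<alpha>\<^sup>2" "\<alpha>\<^sup>2 \<le> \<alpha>^3" "\<alpha>^3 \<le> \<alpha>^4"
      using assms power_increasing[of 1 2 \<alpha>] power_increasing[of 2 3 \<alpha>] power_increasing[of 3 4 \<alpha>]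
      by simp_all
    then show "0 \<le> u - v" "0 \<le> u + v"
      using assms by (simp_all add: u_def v_def)
  qed simp
  with diff have "(2*(6*\<alpha> - 1) * ?C)\<^sup>2 \<le> (3*(6*\<alpha> + 1) * ?A)\<^sup>2"
    by linarith
  then have "2*(6*\<alpha> - 1) * ?C \<le> 3*(6*\<alpha> + 1) * ?A"
    by (rule power2_le_imp_le) (use assms in simp)
  moreover have "1 \<le> ?A" and "0 < 6*\<alpha> - 1"
    using norm_trigpoly_wbdf3_a_ge_one assms by auto
  ultimately show ?thesis
    by (simp add: norm_divide divide_le_eq le_divide_eq mult.commute)
qed

lemma Re_trigpoly_wbdf3_b_div_a_ge:
  assumes "1 \<le> \<alpha>"
  shows "3*(2*\<alpha> - 1) / (2*(6*\<alpha> - 1)) \<le> Re (trigpoly (wbdf3_b \<alpha>) \<theta> / trigpoly (wbdf3_a \<alpha>) \<theta>)"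
proof -
  let ?a = "trigpoly (wbdf3_a \<alpha>) \<theta>"
  let ?B = "Re (trigpoly [\<alpha>, 1 - \<alpha>] \<theta> * cnj ?a)"
  have b: "trigpoly (wbdf3_b \<alpha>) \<theta> = trigpoly [\<alpha>, 1 - \<alpha>] \<theta>"
    using trigpoly_append_zeros[of "[\<alpha>, 1 - \<alpha>]" 2] by (simp add: wbdf3_b_def numeral_2_eq_2)
  define u where "u = 7/6 + 2 * \<alpha> - 5 * \<alpha>\<^sup>2 + 6 * \<alpha>^3"
  define v where "v = -2/3 + \<alpha> + 5 * \<alpha>\<^sup>2 - 6 * \<alpha>^3"
  have diff: "2*(6*\<alpha> - 1) * ?B - 3*(2*\<alpha> - 1) * (cmod ?a)\<^sup>2 = (1 + cos \<theta>) * (u + v * cos \<theta>)"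
    unfolding wbdf3_a_def Re_trigpoly_two_mult_cnj_three norm_trigpoly_three_sq u_def v_def
    by (simp add: power2_eq_square power3_eq_cube field_simps)
  have "0 \<le> (1 + cos \<theta>) * (u + v * cos \<theta>)"
  proof (rule unit_interval_factor_nonneg(1))
    have "\<alpha> \<le> \<alpha>\<^sup>2" "\<alpha>\<^sup>2 \<le> \<alpha>^3"
      using assms power_increasing[of 1 2 \<alpha>] power_increasing[of 2 3 \<alpha>] by simp_all
    then show "0 \<le> u - v" "0 \<le> u + v"
      using assms by (simp_all add: u_def v_def)
  qed simp
  with diff have "3*(2*\<alpha> - 1) * (cmod ?a)\<^sup>2 \<le> 2*(6*\<alpha> - 1) * ?B"
    by linarith
  moreover have "0 < (cmod ?a)\<^sup>2" and "0 < 6*\<alpha> - 1"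
    using norm_trigpoly_wbdf3_a_ge_one[OF assms, of \<theta>] assms by auto
  ultimately show ?thesis
    by (simp add: b complex_div_cnj[of _ ?a] divide_le_eq le_divide_eq mult.commute)
qed

lemma trigpoly_wbdf3_a_at_0: "trigpoly (wbdf3_a \<alpha>) 0 = 1"
  by (simp add: wbdf3_a_def trigpoly_eq_Complex eval_nat_numeral lessThan_Suc complex_eq_iff)

lemma trigpoly_wbdf3_ratios_at_pi:
  assumes "1 \<le> \<alpha>"
  shows "cmod (trigpoly (wbdf3_c \<alpha>) pi / trigpoly (wbdf3_a \<alpha>) pi) = 3*(6*\<alpha> + 1) / (2*(6*\<alpha> - 1))"
    and "Re (trigpoly (wbdf3_b \<alpha>) pi / trigpoly (wbdf3_a \<alpha>) pi) = 3*(2*\<alpha> - 1) / (2*(6*\<alpha> - 1))"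
proof -
  have a: "trigpoly (wbdf3_a \<alpha>) pi = of_real (2*(6*\<alpha> - 1) / 3)"
    and b: "trigpoly (wbdf3_b \<alpha>) pi = of_real (2*\<alpha> - 1)"
    and c: "trigpoly (wbdf3_c \<alpha>) pi = of_real (6*\<alpha> + 1)"
    by (simp_all add: wbdf3_a_def wbdf3_b_def wbdf3_c_def trigpoly_eq_Complex
        eval_nat_numeral lessThan_Suc complex_eq_iff)
  show "cmod (trigpoly (wbdf3_c \<alpha>) pi / trigpoly (wbdf3_a \<alpha>) pi) = 3*(6*\<alpha> + 1) / (2*(6*\<alpha> - 1))"
    unfolding a c of_real_divide[symmetric] norm_of_real using assms by simp
  show "Re (trigpoly (wbdf3_b \<alpha>) pi / trigpoly (wbdf3_a \<alpha>) pi) = 3*(2*\<alpha> - 1) / (2*(6*\<alpha> - 1))"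
    unfolding a b of_real_divide[symmetric] Re_complex_of_real by simp
qed

theorem mainTheorem4:
  fixes \<alpha> :: real
  assumes "\<alpha> \<ge> 1"
  defines "a \<equiv> [3/2*\<alpha> + 1/3, 5/6 - 2*\<alpha>, 1/2*\<alpha> - 1/6]"
      and "b \<equiv> [\<alpha>, 1 - \<alpha>, 0, 0]"
      and "c \<equiv> [2*\<alpha> + 1, -3*\<alpha>, \<alpha>]"
  shows "sigmaF a = 1
       \<and> sigmaE a c = 3*(6*\<alpha> + 1) / (2*(6*\<alpha> - 1))
       \<and> lambdaI a b = 3*(2*\<alpha> - 1) / (2*(6*\<alpha> - 1))
       \<and> IIE a b c = (2*\<alpha> - 1) / (6*\<alpha> + 1)"
proof -
  have abc: "a = wbdf3_a \<alpha>" "b = wbdf3_b \<alpha>" "c = wbdf3_c \<alpha>"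
    by (simp_all add: a_def b_def c_def wbdf3_a_def wbdf3_b_def wbdf3_c_def)
  have ends: "0 \<in> {0..<2*pi}" "pi \<in> {0..<2*pi}" by simp_all
  have sF: "sigmaF a = 1"
    unfolding sigmaF_def abc
    by (rule cSUP_eq_attained[OF ends(1)])
      (use norm_trigpoly_wbdf3_a_ge_one[OF assms(1)] in
        \<open>simp_all add: trigpoly_wbdf3_a_at_0 norm_divide divide_le_eq_1\<close>)
  have sE: "sigmaE a c = 3*(6*\<alpha> + 1) / (2*(6*\<alpha> - 1))"
    unfolding sigmaE_def abc
    by (rule cSUP_eq_attained[OF ends(2)])
      (simp_all only: trigpoly_wbdf3_ratios_at_pi[OF assms(1)] norm_trigpoly_wbdf3_c_div_a_le[OF assms(1)])
  have lI: "lambdaI a b = 3*(2*\<alpha> - 1) / (2*(6*\<alpha> - 1))"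
    unfolding lambdaI_def abc
    by (rule cINF_eq_attained[OF ends(2)])
      (simp_all only: trigpoly_wbdf3_ratios_at_pi[OF assms(1)] Re_trigpoly_wbdf3_b_div_a_ge[OF assms(1)])
  have "IIE a b c = (2*\<alpha> - 1) / (6*\<alpha> + 1)"
    unfolding IIE_def sE lI using assms(1) by (simp add: divide_divide_eq_left' frac_eq_eq) algebra
  with sF sE lI show ?thesis by simp
qed

end
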